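(* Let $\psi:\mathbb{R}\times\mathbb{Z}\to\mathbb{C}$ solve the lattice nonlinear Schrödinger equation $$i\,\partial_t\psi(t,x)=-\Delta\psi(t,x)+|\psi(t,x)|^2\psi(t,x),\qquad x\in\mathbb{Z},$$ where $\Delta f(x)=f(x+1)+f(x-1)-2f(x)$, with initial data satisfying $|\psi(0,x)|\le A$ for all $x\in\mathbb{Z}$. Then there exists a constant $C$ such that for every $x_0\in\mathbb{Z}$ and every $t_0\ge 1$, $$|\psi(t_0,x_0)|\le C A\, t_0^{1/2},\qquad\text{and}\qquad \frac{1}{t_0}\sum_{x\in\mathbb{Z},\,|x-x_0|\le t_0}|\psi(t_0,x)|^2\le C A^2 .$$
   Context: $\Delta=-\partial^*\partial$ is the finite-difference Laplacian on $\mathbb{Z}$, with $\partial f(x)=f(x+1)-f(x)$ and $\partial^*f(x)=f(x-1)-f(x)$. The solution is understood as a global-in-time solution with values in $\ell^\infty(\mathbb{Z})$. *)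

theory Defs
  imports "HOL-Analysis.Analysis"
begin

definition lattice_laplacian :: "(int \<Rightarrow> complex) \<Rightarrow> int \<Rightarrow> complex" where
  "lattice_laplacian f x = f (x + 1) + f (x - 1) - 2 * f x"

definition lattice_nls_solution :: "(real \<Rightarrow> int \<Rightarrow> complex) \<Rightarrow> bool" where
  "lattice_nls_solution \<psi> \<longleftrightarrow>
     (\<forall>T. \<exists>M. \<forall>t x. \<bar>t\<bar> \<le> T \<longrightarrow> cmod (\<psi> t x) \<le> M) \<and>
     (\<forall>t x. ((\<lambda>s. \<psi> s x) has_vector_derivative
         (- \<i>) * (- lattice_laplacian (\<psi> t) x
                  + complex_of_real ((cmod (\<psi> t x))\<^sup>2) * \<psi> t x)) (at t))"

end

theory Submission
  imports Defs
begin

text \<open>With the weight w(x) = exp(-|x - x0| / t0), the weighted mass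
  M(s) = sum_x w(x) |psi(s,x)|^2 obeys the discrete continuity equation
  d/ds |psi(s,x)|^2 = 2 J(x - 1) - 2 J(x), J(y) = Im(conj psi(y) psi(y + 1)),
  in which the cubic term drops out. Summation by parts moves the difference onto the weight,
  and |w(y + 1) - w(y)| <= (e / t0) w, so M' <= (2e / t0) M and Gronwall on [0, t0] gives
  M(t0) <= e^(2e) M(0) <= 4 e^(2e) A^2 t0. As psi is merely bounded, this is done for the sums
  truncated to |x - x0| <= N; their boundary flux is O(e^(-N/t0)) and vanishes as N grows.
  Evaluating at x0, and using w >= 1/e on |x - x0| <= t0, yields the two bounds.\<close>

lemma has_real_derivative_cmod_power2:
  fixes f :: "real \<Rightarrow> complex"
  assumes "(f has_vector_derivative D) (at t within S)"
  shows "((\<lambda>s. (cmod (f s))\<^sup>2) has_real_derivative 2 * Re (cnj (f t) * D)) (at t within S)"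
proof -
  have "((\<lambda>s. f s * cnj (f s)) has_vector_derivative f t * cnj D + D * cnj (f t)) (at t within S)"
    using bounded_bilinear.has_vector_derivative[OF bounded_bilinear_mult assms
        has_vector_derivative_cnj[OF assms]] by simp
  from bounded_linear.has_vector_derivative[OF bounded_linear_Re this]
  show ?thesis
    by (simp add: complex_mult_cnj cmod_power2 has_real_derivative_iff_has_vector_derivative
        ac_simps)
qed

lemma abs_exp_minus_one_le: "\<bar>exp d - 1\<bar> \<le> \<bar>d\<bar> * exp \<bar>d\<bar>" for d :: real
proof (cases "d \<ge> 0")
  case True
  have "(1 - d) * exp d \<le> exp (-d) * exp d"
    using exp_ge_add_one_self[of "-d"] by (intro mult_right_mono) auto
  then show ?thesis
    using True by (simp add: exp_minus algebra_simps)
next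
  case False
  have "\<bar>exp d - 1\<bar> \<le> \<bar>d\<bar>"
    using exp_ge_add_one_self[of d] exp_le_one_iff[of d] False by linarith
  also have "\<dots> \<le> \<bar>d\<bar> * exp \<bar>d\<bar>"
    by (simp add: mult_le_cancel_left1)
  finally show ?thesis .
qed

lemma geometric_sum_exp_neg_inverse_le:
  fixes t :: real
  assumes "t > 0"
  shows "(\<Sum>k\<le>n. exp (- 1 / t) ^ k) \<le> t + 1"
proof -
  define q where "q = exp (- 1 / t)"
  have q: "0 < q" "q < 1" using assms by (simp_all add: q_def)
  have "1 + 1 / t \<le> exp (1 / t)" by (rule exp_ge_add_one_self)
  then have "q \<le> t / (t + 1)"
    using assms by (simp add: q_def exp_minus field_simps)
  then have "1 / (1 - q) \<le> t + 1"
    using assms q by (simp add: field_simps)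
  moreover have "(\<Sum>k\<le>n. q ^ k) = (1 - q ^ Suc n) / (1 - q)"
    unfolding lessThan_Suc_atMost [symmetric] sum_gp_strict using q by simp
  moreover have "(1 - q ^ Suc n) / (1 - q) \<le> 1 / (1 - q)"
    using q by (intro divide_right_mono) auto
  ultimately show ?thesis by (simp add: q_def)
qed

lemma linear_gronwall_bound:
  fixes M M' :: "real \<Rightarrow> real"
  assumes "0 \<le> T" "0 \<le> L" "0 \<le> B"
    and deriv: "\<And>s. 0 \<le> s \<Longrightarrow> s \<le> T \<Longrightarrow> (M has_real_derivative M' s) (at s)"
    and growth: "\<And>s. 0 \<le> s \<Longrightarrow> s \<le> T \<Longrightarrow> M' s \<le> L * M s + B"
  shows "M T \<le> exp (L * T) * (M 0 + B * T)"
proof -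
  define g where "g s = exp (- L * s) * M s - B * s" for s
  have "g T \<le> g 0"
  proof (rule DERIV_nonpos_imp_nonincreasing[OF \<open>0 \<le> T\<close>])
    fix s assume s: "0 \<le> s" "s \<le> T"
    have "(g has_real_derivative exp (- L * s) * (M' s - L * M s) - B) (at s)"
      unfolding g_def
      by (auto intro!: derivative_eq_intros deriv[OF s] simp: algebra_simps)
    moreover have "exp (- L * s) * (M' s - L * M s) - B \<le> exp (- L * s) * B - B"
      using growth[OF s] by (intro diff_right_mono mult_left_mono) auto
    moreover have "exp (- L * s) * B \<le> B"
      using assms s by (intro mult_left_le_one_le) auto
    ultimately show "\<exists>y. (g has_real_derivative y) (at s) \<and> y \<le> 0"
      by (intro exI conjI) (assumption, linarith)
  qed
  then have "exp (L * T) * (exp (- L * T) * M T) \<le> exp (L * T) * (M 0 + B * T)"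
    by (simp add: g_def)
  then show ?thesis
    by (simp add: mult.assoc [symmetric] flip: exp_add)
qed

lemma sum_int_by_parts:
  fixes w J :: "int \<Rightarrow> 'a::comm_ring"
  assumes "a \<le> b"
  shows "(\<Sum>x\<in>{a..b}. w x * (J (x - 1) - J x))
     = w a * J (a - 1) - w b * J b + (\<Sum>y\<in>{a..b - 1}. (w (y + 1) - w y) * J y)"
proof -
  have "(\<Sum>x\<in>{a..b}. w x * J (x - 1)) = (\<Sum>y\<in>{a - 1..b - 1}. w (y + 1) * J y)"
    by (rule sum.reindex_bij_witness[of _ "\<lambda>y. y + 1" "\<lambda>x. x - 1"]) auto
  also have "\<dots> = w a * J (a - 1) + (\<Sum>y\<in>{a..b - 1}. w (y + 1) * J y)"
  proof -
    have "{a - 1..b - 1} = insert (a - 1) {a..b - 1}" using assms by auto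
    then show ?thesis by simp
  qed
  finally have left: "(\<Sum>x\<in>{a..b}. w x * J (x - 1)) = \<dots>" .
  have "{a..b} = insert b {a..b - 1}" using assms by auto
  then have right: "(\<Sum>x\<in>{a..b}. w x * J x) = w b * J b + (\<Sum>y\<in>{a..b - 1}. w y * J y)"
    by simp
  show ?thesis
    unfolding right_diff_distrib left_diff_distrib sum_subtractf left right
    by (simp add: algebra_simps)
qed

definition lattice_current :: "(int \<Rightarrow> complex) \<Rightarrow> int \<Rightarrow> real" where
  "lattice_current f y = Im (cnj (f y) * f (y + 1))"

lemma lattice_nls_mass_flux:
  "2 * Re (cnj (f x) * (- \<i> * (- lattice_laplacian f x + complex_of_real ((cmod (f x))\<^sup>2) * f x)))
     = 2 * lattice_current f (x - 1) - 2 * lattice_current f x"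
  by (simp add: lattice_laplacian_def lattice_current_def algebra_simps cmod_power2 power2_eq_square)

lemma lattice_nls_mass_density_derivative:
  assumes "lattice_nls_solution \<psi>"
  shows "((\<lambda>s. (cmod (\<psi> s x))\<^sup>2) has_real_derivative
           2 * lattice_current (\<psi> t) (x - 1) - 2 * lattice_current (\<psi> t) x) (at t)"
proof -
  have "((\<lambda>s. \<psi> s x) has_vector_derivative
      - \<i> * (- lattice_laplacian (\<psi> t) x + complex_of_real ((cmod (\<psi> t x))\<^sup>2) * \<psi> t x)) (at t)"
    using assms unfolding lattice_nls_solution_def by blast
  from has_real_derivative_cmod_power2[OF this] show ?thesis
    by (simp only: lattice_nls_mass_flux)
qed

lemma abs_lattice_current_le: "\<bar>lattice_current f y\<bar> \<le> cmod (f y) * cmod (f (y + 1))"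
  using abs_Im_le_cmod[of "cnj (f y) * f (y + 1)"] by (simp add: lattice_current_def norm_mult)

definition exp_weight :: "real \<Rightarrow> int \<Rightarrow> int \<Rightarrow> real" where
  "exp_weight R x0 x = exp (- \<bar>real_of_int (x - x0)\<bar> / R)"

lemma abs_exp_weight_diff_le:
  assumes "R \<ge> 1" "\<bar>x - y\<bar> \<le> 1"
  shows "\<bar>exp_weight R x0 x - exp_weight R x0 y\<bar> \<le> exp 1 / R * exp_weight R x0 y"
proof -
  define d where "d = (\<bar>real_of_int (y - x0)\<bar> - \<bar>real_of_int (x - x0)\<bar>) / R"
  have "\<bar>\<bar>real_of_int (y - x0)\<bar> - \<bar>real_of_int (x - x0)\<bar>\<bar> \<le> 1"
    using assms(2) by linarith
  then have d_le: "\<bar>d\<bar> \<le> 1 / R"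
    using assms(1) by (simp add: d_def abs_divide divide_right_mono)
  have "exp_weight R x0 x = exp_weight R x0 y * exp d"
    by (simp add: exp_weight_def d_def diff_divide_distrib flip: exp_add)
  then have "\<bar>exp_weight R x0 x - exp_weight R x0 y\<bar> = \<bar>exp_weight R x0 y * (exp d - 1)\<bar>"
    by (simp add: algebra_simps)
  also have "\<dots> = exp_weight R x0 y * \<bar>exp d - 1\<bar>"
    by (simp add: exp_weight_def abs_mult)
  also have "\<dots> \<le> exp_weight R x0 y * (\<bar>d\<bar> * exp \<bar>d\<bar>)"
    by (intro mult_left_mono abs_exp_minus_one_le) (simp add: exp_weight_def)
  also have "\<bar>d\<bar> * exp \<bar>d\<bar> \<le> 1 / R * exp 1"
    using d_le assms(1) by (intro mult_mono) (auto simp: order_trans[OF d_le])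
  finally show ?thesis
    by (simp add: exp_weight_def mult_left_mono mult.commute)
qed

lemma sum_exp_weight_le:
  assumes "t \<ge> 1"
  shows "(\<Sum>x\<in>{x0 - int N..x0 + int N}. exp_weight t x0 x) \<le> 4 * t"
proof -
  define w where "w = exp_weight t x0"
  define right where "right = (\<lambda>k. x0 + int k) ` {..N}"
  define left where "left = (\<lambda>k. x0 - int k) ` {..N}"
  have w_nonneg: "0 \<le> w x" for x by (simp add: w_def exp_weight_def)
  have "{x0 - int N..x0 + int N} \<subseteq> right \<union> left"
  proof
    fix x assume x: "x \<in> {x0 - int N..x0 + int N}"
    show "x \<in> right \<union> left"
    proof (cases "x0 \<le> x")
      case True
      then have "x = x0 + int (nat (x - x0))" "nat (x - x0) \<le> N" using x by auto
      then show ?thesis unfolding right_def by blast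
    next
      case False
      then have "x = x0 - int (nat (x0 - x))" "nat (x0 - x) \<le> N" using x by auto
      then show ?thesis unfolding left_def by blast
    qed
  qed
  then have "sum w {x0 - int N..x0 + int N} \<le> sum w (right \<union> left)"
    by (intro sum_mono2) (auto simp: right_def left_def w_nonneg)
  also have "\<dots> \<le> sum w right + sum w left"
    using sum_Un[of right left w] sum_nonneg[of "right \<inter> left" w] w_nonneg
    by (simp add: right_def left_def)
  also have "sum w right \<le> (\<Sum>k\<le>N. exp (- 1 / t) ^ k)"
    unfolding right_def
    by (rule order_trans[OF sum_image_le])
      (auto simp: w_def exp_weight_def exp_of_nat_mult [symmetric] o_def)
  also have "sum w left \<le> (\<Sum>k\<le>N. exp (- 1 / t) ^ k)"
    unfolding left_def
    by (rule order_trans[OF sum_image_le])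
      (auto simp: w_def exp_weight_def exp_of_nat_mult [symmetric] o_def)
  finally show ?thesis
    using geometric_sum_exp_neg_inverse_le[of t N] assms by (simp add: w_def)
qed

lemma weight_increment_current_sum_le:
  assumes "t \<ge> 1"
  shows "(\<Sum>y\<in>{a..b - 1}. (exp_weight t x0 (y + 1) - exp_weight t x0 y) * lattice_current f y)
    \<le> exp 1 / t * (\<Sum>x\<in>{a..b}. exp_weight t x0 x * (cmod (f x))\<^sup>2)"
proof -
  define w where "w = exp_weight t x0"
  define m where "m x = w x * (cmod (f x))\<^sup>2" for x
  define c where "c = exp 1 / t"
  have m_nonneg: "0 \<le> m x" for x by (simp add: m_def w_def exp_weight_def)
  have term_le: "(w (y + 1) - w y) * lattice_current f y \<le> c / 2 * (m y + m (y + 1))" for y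
  proof -
    define u where "u x = cmod (f x)" for x
    have dw: "\<bar>w (y + 1) - w y\<bar> \<le> c * w y" "\<bar>w (y + 1) - w y\<bar> \<le> c * w (y + 1)"
      using abs_exp_weight_diff_le[OF assms, of "y + 1" y x0]
        abs_exp_weight_diff_le[OF assms, of y "y + 1" x0]
      by (simp_all add: w_def c_def abs_minus_commute)
    have "(w (y + 1) - w y) * lattice_current f y \<le> \<bar>w (y + 1) - w y\<bar> * \<bar>lattice_current f y\<bar>"
      by (simp flip: abs_mult)
    also have "\<dots> \<le> \<bar>w (y + 1) - w y\<bar> * (u y * u (y + 1))"
      unfolding u_def by (intro mult_left_mono abs_lattice_current_le) simp
    also have "\<dots> \<le> \<bar>w (y + 1) - w y\<bar> * (((u y)\<^sup>2 + (u (y + 1))\<^sup>2) / 2)"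
      using sum_squares_bound[of "u y" "u (y + 1)"] by (intro mult_left_mono) auto
    also have "\<dots> = (\<bar>w (y + 1) - w y\<bar> * (u y)\<^sup>2 + \<bar>w (y + 1) - w y\<bar> * (u (y + 1))\<^sup>2) / 2"
      by (simp add: algebra_simps)
    also have "\<dots> \<le> (c * w y * (u y)\<^sup>2 + c * w (y + 1) * (u (y + 1))\<^sup>2) / 2"
      using dw by (intro divide_right_mono add_mono mult_right_mono) auto
    finally show ?thesis
      by (simp add: m_def u_def algebra_simps)
  qed
  have shifted: "(\<Sum>y\<in>{a..b - 1}. m (y + 1)) = (\<Sum>x\<in>{a + 1..b}. m x)"
    by (rule sum.reindex_bij_witness[of _ "\<lambda>x. x - 1" "\<lambda>y. y + 1"]) auto
  have "(\<Sum>y\<in>{a..b - 1}. (w (y + 1) - w y) * lattice_current f y)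
      \<le> (\<Sum>y\<in>{a..b - 1}. c / 2 * (m y + m (y + 1)))"
    by (rule sum_mono) (rule term_le)
  also have "\<dots> = c / 2 * ((\<Sum>y\<in>{a..b - 1}. m y) + (\<Sum>x\<in>{a + 1..b}. m x))"
    by (simp only: sum_distrib_left [symmetric] sum.distrib shifted)
  also have "\<dots> \<le> c / 2 * (sum m {a..b} + sum m {a..b})"
    using assms m_nonneg
    by (intro mult_left_mono add_mono sum_mono2) (auto simp: c_def)
  finally show ?thesis
    by (simp add: w_def m_def c_def)
qed

lemma weighted_current_sum_le:
  fixes f :: "int \<Rightarrow> complex"
  assumes "t \<ge> 1" and bounded: "\<And>y. cmod (f y) \<le> K"
  shows "(\<Sum>x\<in>{x0 - int N..x0 + int N}.
            exp_weight t x0 x * (2 * lattice_current f (x - 1) - 2 * lattice_current f x))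
    \<le> 2 * exp 1 / t * (\<Sum>x\<in>{x0 - int N..x0 + int N}. exp_weight t x0 x * (cmod (f x))\<^sup>2)
      + 4 * exp (- real N / t) * K\<^sup>2"
proof -
  define w where "w = exp_weight t x0"
  define a where "a = x0 - int N"
  define b where "b = x0 + int N"
  have current_le: "\<bar>lattice_current f y\<bar> \<le> K\<^sup>2" for y
    using abs_lattice_current_le[of f y] bounded[of y] bounded[of "y + 1"]
      mult_mono[of "cmod (f y)" K "cmod (f (y + 1))" K]
    by (simp add: power2_eq_square)
  have boundary_weight: "w a = exp (- real N / t)" "w b = exp (- real N / t)"
    by (simp_all add: w_def a_def b_def exp_weight_def)
  have "lattice_current f (a - 1) \<le> K\<^sup>2" "- lattice_current f b \<le> K\<^sup>2"
    using current_le[of "a - 1"] current_le[of b] by (simp_all add: abs_le_iff)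
  then have boundary: "w a * lattice_current f (a - 1) - w b * lattice_current f b
      \<le> 2 * exp (- real N / t) * K\<^sup>2"
    unfolding boundary_weight right_diff_distrib [symmetric]
    using mult_left_mono[of "lattice_current f (a - 1) - lattice_current f b" "2 * K\<^sup>2"
        "exp (- real N / t)"]
    by simp
  have "(\<Sum>x\<in>{a..b}. w x * (2 * lattice_current f (x - 1) - 2 * lattice_current f x))
      = 2 * (\<Sum>x\<in>{a..b}. w x * (lattice_current f (x - 1) - lattice_current f x))"
    by (simp add: sum_distrib_left algebra_simps)
  also have "\<dots> = 2 * (w a * lattice_current f (a - 1) - w b * lattice_current f b)
        + 2 * (\<Sum>y\<in>{a..b - 1}. (w (y + 1) - w y) * lattice_current f y)"
    by (subst sum_int_by_parts) (simp_all add: a_def b_def algebra_simps)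
  also have "\<dots> \<le> 2 * (2 * exp (- real N / t) * K\<^sup>2)
        + 2 * (exp 1 / t * (\<Sum>x\<in>{a..b}. w x * (cmod (f x))\<^sup>2))"
    using boundary weight_increment_current_sum_le[OF assms(1), where a=a and b=b and f=f]
    by (intro add_mono mult_left_mono) (simp_all add: w_def)
  finally show ?thesis
    by (simp add: w_def a_def b_def algebra_simps)
qed

lemma truncated_weighted_mass_le:
  assumes sol: "lattice_nls_solution \<psi>" and init: "\<And>x. cmod (\<psi> 0 x) \<le> A" and "t \<ge> 1"
    and bounded: "\<And>s x. 0 \<le> s \<Longrightarrow> s \<le> t \<Longrightarrow> cmod (\<psi> s x) \<le> K"
  shows "(\<Sum>x\<in>{x0 - int N..x0 + int N}. exp_weight t x0 x * (cmod (\<psi> t x))\<^sup>2)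
    \<le> exp (2 * exp 1) * (4 * A\<^sup>2 * t + 4 * exp (- real N / t) * K\<^sup>2 * t)"
proof -
  define I where "I = {x0 - int N..x0 + int N}"
  define w where "w = exp_weight t x0"
  define M where "M s = (\<Sum>x\<in>I. w x * (cmod (\<psi> s x))\<^sup>2)" for s
  define M' where "M' s = (\<Sum>x\<in>I. w x *
      (2 * lattice_current (\<psi> s) (x - 1) - 2 * lattice_current (\<psi> s) x))" for s
  define L where "L = 2 * exp 1 / t"
  define B where "B = 4 * exp (- real N / t) * K\<^sup>2"
  have w_nonneg: "0 \<le> w x" for x by (simp add: w_def exp_weight_def)
  have M0: "M 0 \<le> 4 * t * A\<^sup>2"
  proof -
    have "M 0 \<le> (\<Sum>x\<in>I. w x * A\<^sup>2)"
      unfolding M_def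
      using init w_nonneg by (intro sum_mono mult_left_mono power_mono) auto
    also have "\<dots> = sum w I * A\<^sup>2"
      by (simp add: sum_distrib_right)
    also have "\<dots> \<le> 4 * t * A\<^sup>2"
      using sum_exp_weight_le[OF \<open>t \<ge> 1\<close>] by (intro mult_right_mono) (simp_all add: I_def w_def)
    finally show ?thesis .
  qed
  have "M t \<le> exp (L * t) * (M 0 + B * t)"
  proof (rule linear_gronwall_bound)
    show "0 \<le> t" "0 \<le> L" "0 \<le> B"
      using \<open>t \<ge> 1\<close> by (auto simp: L_def B_def)
    show "(M has_real_derivative M' s) (at s)" for s
      unfolding M_def M'_def
      by (intro DERIV_sum DERIV_cmult lattice_nls_mass_density_derivative[OF sol])
    show "M' s \<le> L * M s + B" if "0 \<le> s" "s \<le> t" for s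
      unfolding M_def M'_def L_def B_def I_def w_def
      using weighted_current_sum_le[OF \<open>t \<ge> 1\<close> bounded[OF that]] by simp
  qed
  also have "\<dots> \<le> exp (2 * exp 1) * (4 * t * A\<^sup>2 + B * t)"
    using \<open>t \<ge> 1\<close> M0 by (simp add: L_def)
  finally show ?thesis
    by (simp add: M_def I_def w_def B_def algebra_simps)
qed

lemma weighted_mass_le:
  assumes sol: "lattice_nls_solution \<psi>" and init: "\<And>x. cmod (\<psi> 0 x) \<le> A" and "t \<ge> 1"
    and "finite S"
  shows "(\<Sum>x\<in>S. exp_weight t x0 x * (cmod (\<psi> t x))\<^sup>2) \<le> 4 * exp (2 * exp 1) * A\<^sup>2 * t"
proof -
  define w where "w = exp_weight t x0"
  obtain K where K: "\<And>s x. \<bar>s\<bar> \<le> t \<Longrightarrow> cmod (\<psi> s x) \<le> K"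
    using sol unfolding lattice_nls_solution_def by blast
  define F where "F N = exp (2 * exp 1) * (4 * A\<^sup>2 * t + 4 * exp (- real N / t) * K\<^sup>2 * t)"
    for N :: nat
  obtain n where n: "abs ` (\<lambda>x. x - x0) ` S \<subseteq> {..n}"
    using \<open>finite S\<close> finite_int_iff_bounded_le by blast
  have "exp (- real N / t) = exp (- 1 / t) ^ N" for N
    by (simp flip: exp_of_nat_mult)
  then have "(\<lambda>N. exp (- real N / t)) \<longlonglongrightarrow> 0"
    using \<open>t \<ge> 1\<close> by (simp only:) (intro LIMSEQ_power_zero, simp)
  then have "F \<longlonglongrightarrow> exp (2 * exp 1) * (4 * A\<^sup>2 * t + 4 * 0 * K\<^sup>2 * t)"
    unfolding F_def by (intro tendsto_intros)
  moreover have "(\<Sum>x\<in>S. w x * (cmod (\<psi> t x))\<^sup>2) \<le> F N" if "nat n \<le> N" for N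
  proof -
    have "S \<subseteq> {x0 - int N..x0 + int N}"
      using n that by force
    then have "(\<Sum>x\<in>S. w x * (cmod (\<psi> t x))\<^sup>2)
        \<le> (\<Sum>x\<in>{x0 - int N..x0 + int N}. w x * (cmod (\<psi> t x))\<^sup>2)"
      by (intro sum_mono2) (auto simp: w_def exp_weight_def)
    also have "\<dots> \<le> F N"
      unfolding w_def F_def
      using \<open>t \<ge> 1\<close> by (intro truncated_weighted_mass_le[OF sol init]) (auto intro: K)
    finally show ?thesis .
  qed
  ultimately have "(\<Sum>x\<in>S. w x * (cmod (\<psi> t x))\<^sup>2) \<le> exp (2 * exp 1) * (4 * A\<^sup>2 * t + 4 * 0 * K\<^sup>2 * t)"
    by (intro LIMSEQ_le_const) auto
  then show ?thesis
    by (simp add: w_def)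
qed

lemma lattice_nls_pointwise_bound:
  assumes sol: "lattice_nls_solution \<psi>" and init: "\<And>x. cmod (\<psi> 0 x) \<le> A" and "t \<ge> 1"
  shows "cmod (\<psi> t x0) \<le> 2 * exp (exp 1) * A * sqrt t"
proof (rule power2_le_imp_le)
  have "0 \<le> A"
    using init[of 0] norm_ge_zero order_trans by blast
  then show "0 \<le> 2 * exp (exp 1) * A * sqrt t"
    using \<open>t \<ge> 1\<close> by simp
  have "(cmod (\<psi> t x0))\<^sup>2 \<le> 4 * exp (2 * exp 1) * A\<^sup>2 * t"
    using weighted_mass_le[OF sol init \<open>t \<ge> 1\<close>, of "{x0}" x0] by (simp add: exp_weight_def)
  also have "\<dots> = (2 * exp (exp 1) * A * sqrt t)\<^sup>2"
    using \<open>t \<ge> 1\<close> by (simp add: exp_double power_mult_distrib)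
  finally show "(cmod (\<psi> t x0))\<^sup>2 \<le> (2 * exp (exp 1) * A * sqrt t)\<^sup>2" .
qed

lemma lattice_nls_local_mass_bound:
  assumes sol: "lattice_nls_solution \<psi>" and init: "\<And>x. cmod (\<psi> 0 x) \<le> A" and "t \<ge> 1"
  shows "(1 / t) * (\<Sum>x\<in>{x. \<bar>real_of_int (x - x0)\<bar> \<le> t}. (cmod (\<psi> t x))\<^sup>2)
    \<le> 4 * exp (2 * exp 1 + 1) * A\<^sup>2"
proof -
  define S where "S = {x. \<bar>real_of_int (x - x0)\<bar> \<le> t}"
  have "S \<subseteq> {x0 - \<lceil>t\<rceil>..x0 + \<lceil>t\<rceil>}"
  proof
    fix x assume "x \<in> S"
    then have "\<bar>x - x0\<bar> \<le> \<lceil>t\<rceil>"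
      unfolding S_def by (metis ceiling_mono ceiling_of_int mem_Collect_eq of_int_abs)
    then show "x \<in> {x0 - \<lceil>t\<rceil>..x0 + \<lceil>t\<rceil>}"
      by auto
  qed
  then have "finite S"
    using finite_subset by blast
  have "(\<Sum>x\<in>S. (cmod (\<psi> t x))\<^sup>2) \<le> (\<Sum>x\<in>S. exp 1 * (exp_weight t x0 x * (cmod (\<psi> t x))\<^sup>2))"
  proof (rule sum_mono)
    fix x assume "x \<in> S"
    then have "exp (-1) \<le> exp_weight t x0 x"
      using \<open>t \<ge> 1\<close> by (simp add: S_def exp_weight_def)
    then have "1 \<le> exp 1 * exp_weight t x0 x"
      by (simp add: exp_minus field_simps)
    then show "(cmod (\<psi> t x))\<^sup>2 \<le> exp 1 * (exp_weight t x0 x * (cmod (\<psi> t x))\<^sup>2)"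
      using mult_right_mono[of 1 "exp 1 * exp_weight t x0 x" "(cmod (\<psi> t x))\<^sup>2"]
      by (simp add: mult.assoc)
  qed
  also have "\<dots> \<le> exp 1 * (4 * exp (2 * exp 1) * A\<^sup>2 * t)"
    unfolding sum_distrib_left [symmetric]
    by (intro mult_left_mono weighted_mass_le[OF sol init \<open>t \<ge> 1\<close> \<open>finite S\<close>]) simp
  finally show ?thesis
    using \<open>t \<ge> 1\<close> by (simp add: S_def exp_add field_simps)
qed

theorem proposition2:
  shows "\<exists>C::real. \<forall>(A::real) (\<psi>::real \<Rightarrow> int \<Rightarrow> complex).
     lattice_nls_solution \<psi> \<and> (\<forall>x. cmod (\<psi> 0 x) \<le> A) \<longrightarrow>
     (\<forall>x0::int. \<forall>t0::real. t0 \<ge> 1 \<longrightarrow>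
        cmod (\<psi> t0 x0) \<le> C * A * sqrt t0 \<and>
        (1 / t0) * (\<Sum>x\<in>{x::int. \<bar>real_of_int (x - x0)\<bar> \<le> t0}. (cmod (\<psi> t0 x))\<^sup>2)
          \<le> C * A\<^sup>2)"
proof (intro exI[of _ "4 * exp (2 * exp 1 + 1)"] allI impI conjI)
  fix A \<psi> x0 and t0 :: real
  assume "lattice_nls_solution \<psi> \<and> (\<forall>x. cmod (\<psi> 0 x) \<le> A)" and "t0 \<ge> 1"
  then have sol: "lattice_nls_solution \<psi>" and init: "\<And>x. cmod (\<psi> 0 x) \<le> A"
    by auto
  have "0 \<le> A"
    using init[of 0] norm_ge_zero order_trans by blast
  have "2 * exp (exp 1) \<le> 4 * exp (2 * exp 1 + 1 :: real)"
    by (intro mult_mono) auto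
  then have "2 * exp (exp 1) * A * sqrt t0 \<le> 4 * exp (2 * exp 1 + 1) * A * sqrt t0"
    using \<open>0 \<le> A\<close> \<open>t0 \<ge> 1\<close> by (intro mult_right_mono) auto
  with lattice_nls_pointwise_bound[OF sol init \<open>t0 \<ge> 1\<close>]
  show "cmod (\<psi> t0 x0) \<le> 4 * exp (2 * exp 1 + 1) * A * sqrt t0"
    by (rule order_trans)
  show "1 / t0 * (\<Sum>x\<in>{x. \<bar>real_of_int (x - x0)\<bar> \<le> t0}. (cmod (\<psi> t0 x))\<^sup>2)
      \<le> 4 * exp (2 * exp 1 + 1) * A\<^sup>2"
    by (rule lattice_nls_local_mass_bound[OF sol init \<open>t0 \<ge> 1\<close>])
qed

end
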